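(* Let $\pi$ be the policy induced by Dual Gradient Descent with Proxy Assignments. Then $$\mathbb E\big[V^\pi[\omega]\big]\le\mathbb E\big[\widetilde V^{\textsc{off}}_1[\omega_1]\big]+\sum_{k\in[K]}\mathbb E\big[\widetilde{\textsc{Reg}}_k[\omega_k]\big]+O\big(K^{5/2}\sqrt T\big).$$
   Context: Model. There are $m$ resources and $n$ arrival types; type $j$ has cost vector $c_j\in\mathbb R^m$ and allowed resources $\mathcal S_j\subseteq[m]$, $\max_{i,j}|c_{ji}|<\infty$. The horizon has $T$ periods partitioned into $K=\Theta(1)$ epochs ($T$ a multiple of $K$), epoch $k$ being $\mathcal T_k=\{(k-1)T/K+1,\dots,kT/K\}$. In period $t$ one arrival of type $j^t$ occurs, $j^1,\dots,j^T$ i.i.d. with $\mathbb P(j^t=j)=p_j$, $p$ not depending on $T$ and unknown to the decision-maker; $\omega=(j^t)_{t\le T}$, $\omega_k=(j^t)_{t\in\mathcal T_k}$, $\Lambda_j(t_1:t_2)=\sum_{t_1<\tau\le t_2}\mathbf 1\{j^\tau=j\}$. Feasible decisions: $\mathcal X^t=\{x\in\{0,1\}^m:\sum_ix_i\le1,\ x_i=0\ \forall i\notin\mathcal S_{j^t}\}$. $Z^\pi_{ji}(t)$ counts type-$j$ arrivals assigned to $i$ in periods $1..t$, $Z^\pi_i=\sum_jZ^\pi_{ji}$. Each epoch $k$ and resource $i$ has a target $\rho_{ki}\in[0,1]$ and convex $L$-Lipschitz $g_{ki}:[0,1]\to\mathbb R_{\ge0}$ with $g_{ki}(\rho_{ki})=0$.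 Cost: $V^\pi[\omega]=\sum_{j,i}c_{ji}Z^\pi_{ji}(T)+\frac TK\sum_k\sum_ik\,g_{ki}\big(Z^\pi_i(kT/K)/(kT/K)\big)$. Expectations are over arrivals and algorithm decisions; $O(\cdot)$ is as $T\to\infty$ with the hidden constant depending only on $m,n,c,L,p$. Dual Gradient Descent with Proxy Assignments (stepsize $\eta$, initial $\mu^1\in\mathbb R^{K\times m}$): for $t=1,\dots,T$, with $k$ the epoch of $t$: if $t=(k-1)T/K+1$ set $\mu^t_{k'}=\mu^1_{k'}$ for $k'\ge k$; observe $j=j^t$; for every $k'\ge k$ compute $\tilde x^t_{k'}\in\arg\min_{x\in\mathcal X^t}\sum_ix_i(c_{ji}-\mu^t_{k'i})$; implement $x^t=\tilde x^t_k$; compute $a^t\in\arg\min_{a\in[0,1]^{(K+1-k)\times m}}\sum_{k'\ge k}k'\sum_ig_{k'i}\big(\frac{\sum_{t'\le(k-1)T/K}x^{t'}_i}{k'T/K}+\sum_{k''=k}^{k'}\frac{a_{k''i}}{k'}\big)+\sum_{k'\ge k}\sum_i\mu^t_{k'i}a_{k'i}$; update $\mu^{t+1}_{k'}=\mu^t_{k'}+\eta(a^t_{k'}-\tilde x^t_{k'})$ for $k'\ge k$. Proxy quantities. For $k\le k_1\le k_2\le K$: $\widetilde Z^\pi_{ji,k}\big(\frac{(k_1-1)T}K:\frac{k_2T}K\big)=\sum_{t\in\mathcal T_k}\sum_{k''=k_1}^{k_2}\tilde x^t_{k''i}\mathbf 1\{j^t=j\}$, $\widetilde Z^\pi_{i,k}=\sum_j\widetilde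 Z^\pi_{ji,k}$. Cumulative proxy cost: $\widetilde V^\pi_k[\omega_k\mid z]=\sum_{j,i}c_{ji}\widetilde Z^\pi_{ji,k}\big(\frac{(k-1)T}K:T\big)+\frac TK\sum_{k'\ge k}\sum_ik'g_{k'i}\Big(\frac{z_i+\widetilde Z^\pi_{i,k}((k-1)T/K:k'T/K)}{k'T/K}\Big)$. Proxy offline optimum $\widetilde V^{\textsc{off}}_k[\omega_k\mid z]$: the minimum over nonnegative integers $Z^{(k')}_{ji}$ ($k'\ge k$), zero for $i\notin\mathcal S_j$, with $\sum_iZ^{(k')}_{ji}\le\Lambda_j\big(\frac{(k-1)T}K:\frac{kT}K\big)$ for all $j,k'\ge k$, of $\sum_{j,i}c_{ji}\sum_{k'\ge k}Z^{(k')}_{ji}+\frac TK\sum_{k'\ge k}\sum_ik'g_{k'i}\Big(\frac{z_i+\sum_j\sum_{k''=k}^{k'}Z^{(k'')}_{ji}}{k'T/K}\Big)$. For $k=1$, $z=0$ is suppressed: $\widetilde V^{\textsc{off}}_1[\omega_1]$, $\widetilde V^\pi_1[\omega_1]$. Proxy regret: $\widetilde{\textsc{Reg}}_k[\omega_k]=\widetilde V^\pi_k[\omega_k\mid Z^\pi((k-1)T/K)]-\widetilde V^{\textsc{off}}_k[\omega_k\mid Z^\pi((k-1)T/K)]$. *)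

theory Defs
  imports "HOL-Analysis.Analysis"
begin

text \<open>Resources are i < m, arrival types are j < n (0-based);
periods t are 1..T and epochs k are 1..K (1-based). An arrival sequence
omega is a function nat => nat, meaningful on 1..T.
Tie-breaking rules of the argmin steps are arbitrary causal deterministic
selectors: they may depend on the period t, the arrival history up to t,
and the epoch index k'; they are required to return argmins along the
actual trajectory.\<close>

type_synonym xsel = "nat \<Rightarrow> (nat \<Rightarrow> nat) \<Rightarrow> nat \<Rightarrow> nat \<Rightarrow> nat"
type_synonym asel = "nat \<Rightarrow> (nat \<Rightarrow> nat) \<Rightarrow> nat \<Rightarrow> nat \<Rightarrow> real"

definition hist :: "(nat \<Rightarrow> nat) \<Rightarrow> nat \<Rightarrow> nat \<Rightarrow> nat" where
  "hist \<omega> t = (\<lambda>s. if s \<le> t then \<omega> s else 0)"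

definition ep :: "nat \<Rightarrow> nat \<Rightarrow> nat \<Rightarrow> nat" where
  "ep T K t = (t - 1) div (T div K) + 1"

definition is_start :: "nat \<Rightarrow> nat \<Rightarrow> nat \<Rightarrow> bool" where
  "is_start T K t \<longleftrightarrow> (t - 1) mod (T div K) = 0"

definition epoch :: "nat \<Rightarrow> nat \<Rightarrow> nat \<Rightarrow> nat set" where
  "epoch T K k = {(k - 1) * (T div K) + 1 .. k * (T div K)}"

definition Xset :: "nat \<Rightarrow> (nat \<Rightarrow> nat set) \<Rightarrow> nat \<Rightarrow> (nat \<Rightarrow> nat) set" where
  "Xset m S j = {x. (\<forall>i. x i \<le> 1) \<and> (\<forall>i. (m \<le> i \<or> i \<notin> S j) \<longrightarrow> x i = 0)
                   \<and> (\<Sum>i<m. x i) \<le> 1}"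

text \<open>dual variables mu^t (after the epoch reset) of DGD with proxy assignments\<close>
primrec dgd_mu :: "nat \<Rightarrow> nat \<Rightarrow> real \<Rightarrow> (nat \<Rightarrow> nat \<Rightarrow> real) \<Rightarrow> xsel \<Rightarrow> asel
    \<Rightarrow> (nat \<Rightarrow> nat) \<Rightarrow> nat \<Rightarrow> nat \<Rightarrow> nat \<Rightarrow> real" where
  "dgd_mu K T \<eta> \<mu>1 selX selA \<omega> 0 = \<mu>1"
| "dgd_mu K T \<eta> \<mu>1 selX selA \<omega> (Suc t) =
     (let prev = (if t = 0 then \<mu>1 else
          (\<lambda>k' i. if ep T K t \<le> k'
                  then dgd_mu K T \<eta> \<mu>1 selX selA \<omega> t k' i
                       + \<eta> * (selA t (hist \<omega> t) k' i - real (selX t (hist \<omega> t) k' i))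
                  else dgd_mu K T \<eta> \<mu>1 selX selA \<omega> t k' i))
      in (\<lambda>k' i. if is_start T K (Suc t) \<and> ep T K (Suc t) \<le> k' then \<mu>1 k' i else prev k' i))"

definition xI :: "nat \<Rightarrow> nat \<Rightarrow> xsel \<Rightarrow> (nat \<Rightarrow> nat) \<Rightarrow> nat \<Rightarrow> nat \<Rightarrow> nat" where
  "xI K T selX \<omega> t i = selX t (hist \<omega> t) (ep T K t) i"

definition Zji :: "nat \<Rightarrow> nat \<Rightarrow> xsel \<Rightarrow> (nat \<Rightarrow> nat) \<Rightarrow> nat \<Rightarrow> nat \<Rightarrow> nat \<Rightarrow> nat" where
  "Zji K T selX \<omega> j i t = (\<Sum>s\<in>{1..t}. if \<omega> s = j then xI K T selX \<omega> s i else 0)"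

definition Zi :: "nat \<Rightarrow> nat \<Rightarrow> nat \<Rightarrow> xsel \<Rightarrow> (nat \<Rightarrow> nat) \<Rightarrow> nat \<Rightarrow> nat \<Rightarrow> nat" where
  "Zi n K T selX \<omega> i t = (\<Sum>j<n. Zji K T selX \<omega> j i t)"

definition abox :: "nat \<Rightarrow> nat \<Rightarrow> nat \<Rightarrow> (nat \<Rightarrow> nat \<Rightarrow> real) \<Rightarrow> bool" where
  "abox m K k a \<longleftrightarrow> (\<forall>k'\<in>{k..K}. \<forall>i<m. 0 \<le> a k' i \<and> a k' i \<le> 1)"

text \<open>objective of the a^t step; xprev i = sum of implemented x_i over periods 1..(k-1)T/K\<close>
definition aobj :: "nat \<Rightarrow> nat \<Rightarrow> nat \<Rightarrow> (nat \<Rightarrow> nat \<Rightarrow> real \<Rightarrow> real) \<Rightarrow> (nat \<Rightarrow> real)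
    \<Rightarrow> (nat \<Rightarrow> nat \<Rightarrow> real) \<Rightarrow> nat \<Rightarrow> (nat \<Rightarrow> nat \<Rightarrow> real) \<Rightarrow> real" where
  "aobj m K T g xprev \<mu> k a =
     (\<Sum>k'=k..K. real k' * (\<Sum>i<m. g k' i (xprev i / (real k' * real T / real K)
                                           + (\<Sum>k''=k..k'. a k'' i) / real k')))
     + (\<Sum>k'=k..K. \<Sum>i<m. \<mu> k' i * a k' i)"

text \<open>the selectors realise the argmin steps of the algorithm along the trajectory for omega\<close>
definition dgd_valid ::
  "nat \<Rightarrow> (nat \<Rightarrow> nat \<Rightarrow> real) \<Rightarrow> (nat \<Rightarrow> nat set) \<Rightarrow> (nat \<Rightarrow> nat \<Rightarrow> real \<Rightarrow> real)
   \<Rightarrow> nat \<Rightarrow> nat \<Rightarrow> real \<Rightarrow> (nat \<Rightarrow> nat \<Rightarrow> real) \<Rightarrow> xsel \<Rightarrow> asel \<Rightarrow> (nat \<Rightarrow> nat) \<Rightarrow> bool" where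
  "dgd_valid m c S g K T \<eta> \<mu>1 selX selA \<omega> \<longleftrightarrow>
    (\<forall>t\<in>{1..T}.
      let k = ep T K t; \<mu> = dgd_mu K T \<eta> \<mu>1 selX selA \<omega> t; j = \<omega> t;
          xprev = (\<lambda>i. \<Sum>t'\<in>{1..(k - 1) * (T div K)}. real (xI K T selX \<omega> t' i));
          a = selA t (hist \<omega> t)
      in (\<forall>k'\<in>{k..K}.
            selX t (hist \<omega> t) k' \<in> Xset m S j \<and>
            (\<forall>y\<in>Xset m S j.
               (\<Sum>i<m. real (selX t (hist \<omega> t) k' i) * (c j i - \<mu> k' i))
                 \<le> (\<Sum>i<m. real (y i) * (c j i - \<mu> k' i))))
         \<and> abox m K k a
         \<and> (\<forall>b. abox m K k b \<longrightarrow> aobj m K T g xprev \<mu> k a \<le> aobj m K T g xprev \<mu> k b))"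

definition Vpi :: "nat \<Rightarrow> nat \<Rightarrow> (nat \<Rightarrow> nat \<Rightarrow> real) \<Rightarrow> (nat \<Rightarrow> nat \<Rightarrow> real \<Rightarrow> real)
    \<Rightarrow> nat \<Rightarrow> nat \<Rightarrow> xsel \<Rightarrow> (nat \<Rightarrow> nat) \<Rightarrow> real" where
  "Vpi m n c g K T selX \<omega> =
     (\<Sum>j<n. \<Sum>i<m. c j i * real (Zji K T selX \<omega> j i T))
     + real T / real K * (\<Sum>k=1..K. \<Sum>i<m. real k *
          g k i (real (Zi n K T selX \<omega> i (k * (T div K))) / (real k * real T / real K)))"

text \<open>proxy counts tilde Z_{ji,k}((k1-1)T/K : k2 T/K)\<close>
definition Zt :: "nat \<Rightarrow> nat \<Rightarrow> xsel \<Rightarrow> (nat \<Rightarrow> nat) \<Rightarrow> nat \<Rightarrow> nat \<Rightarrow> nat \<Rightarrow> nat \<Rightarrow> nat \<Rightarrow> nat" where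
  "Zt K T selX \<omega> k k1 k2 j i =
     (\<Sum>t\<in>epoch T K k. \<Sum>k''=k1..k2. if \<omega> t = j then selX t (hist \<omega> t) k'' i else 0)"

definition Vprox :: "nat \<Rightarrow> nat \<Rightarrow> (nat \<Rightarrow> nat \<Rightarrow> real) \<Rightarrow> (nat \<Rightarrow> nat \<Rightarrow> real \<Rightarrow> real)
    \<Rightarrow> nat \<Rightarrow> nat \<Rightarrow> xsel \<Rightarrow> (nat \<Rightarrow> nat) \<Rightarrow> nat \<Rightarrow> (nat \<Rightarrow> real) \<Rightarrow> real" where
  "Vprox m n c g K T selX \<omega> k z =
     (\<Sum>j<n. \<Sum>i<m. c j i * real (Zt K T selX \<omega> k k K j i))
     + real T / real K * (\<Sum>k'=k..K. \<Sum>i<m. real k' *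
          g k' i ((z i + real (\<Sum>j<n. Zt K T selX \<omega> k k k' j i)) / (real k' * real T / real K)))"

definition Lam :: "nat \<Rightarrow> nat \<Rightarrow> (nat \<Rightarrow> nat) \<Rightarrow> nat \<Rightarrow> nat \<Rightarrow> nat" where
  "Lam T K \<omega> k j = card {t\<in>epoch T K k. \<omega> t = j}"

text \<open>feasible integer plans Z^{(k')}_{ji}, k' in k..K, for the proxy offline problem\<close>
definition offfeas :: "nat \<Rightarrow> nat \<Rightarrow> (nat \<Rightarrow> nat set) \<Rightarrow> nat \<Rightarrow> nat \<Rightarrow> (nat \<Rightarrow> nat)
    \<Rightarrow> (nat \<Rightarrow> nat \<Rightarrow> nat \<Rightarrow> nat) set" where
  "offfeas m n S K k lam =
     {Z. (\<forall>k' j i. Z k' j i \<noteq> 0 \<longrightarrow> k \<le> k' \<and> k' \<le> K \<and> j < n \<and> i < m \<and> i \<in> S j)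
         \<and> (\<forall>k'\<in>{k..K}. \<forall>j<n. (\<Sum>i<m. Z k' j i) \<le> lam j)}"

definition offobj :: "nat \<Rightarrow> nat \<Rightarrow> (nat \<Rightarrow> nat \<Rightarrow> real) \<Rightarrow> (nat \<Rightarrow> nat \<Rightarrow> real \<Rightarrow> real)
    \<Rightarrow> nat \<Rightarrow> nat \<Rightarrow> nat \<Rightarrow> (nat \<Rightarrow> real) \<Rightarrow> (nat \<Rightarrow> nat \<Rightarrow> nat \<Rightarrow> nat) \<Rightarrow> real" where
  "offobj m n c g K T k z Z =
     (\<Sum>j<n. \<Sum>i<m. c j i * real (\<Sum>k'=k..K. Z k' j i))
     + real T / real K * (\<Sum>k'=k..K. \<Sum>i<m. real k' *
          g k' i ((z i + real (\<Sum>j<n. \<Sum>k''=k..k'. Z k'' j i)) / (real k' * real T / real K)))"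

definition Voff :: "nat \<Rightarrow> nat \<Rightarrow> (nat \<Rightarrow> nat \<Rightarrow> real) \<Rightarrow> (nat \<Rightarrow> nat set)
    \<Rightarrow> (nat \<Rightarrow> nat \<Rightarrow> real \<Rightarrow> real) \<Rightarrow> nat \<Rightarrow> nat \<Rightarrow> (nat \<Rightarrow> nat) \<Rightarrow> nat \<Rightarrow> (nat \<Rightarrow> real) \<Rightarrow> real" where
  "Voff m n c S g K T \<omega> k z =
     Min (offobj m n c g K T k z ` offfeas m n S K k (Lam T K \<omega> k))"

definition Regt :: "nat \<Rightarrow> nat \<Rightarrow> (nat \<Rightarrow> nat \<Rightarrow> real) \<Rightarrow> (nat \<Rightarrow> nat set)
    \<Rightarrow> (nat \<Rightarrow> nat \<Rightarrow> real \<Rightarrow> real) \<Rightarrow> nat \<Rightarrow> nat \<Rightarrow> xsel \<Rightarrow> (nat \<Rightarrow> nat) \<Rightarrow> nat \<Rightarrow> real" where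
  "Regt m n c S g K T selX \<omega> k =
     (let z = (\<lambda>i. real (Zi n K T selX \<omega> i ((k - 1) * (T div K))))
      in Vprox m n c g K T selX \<omega> k z - Voff m n c S g K T \<omega> k z)"

definition Ex :: "nat \<Rightarrow> nat \<Rightarrow> (nat \<Rightarrow> real) \<Rightarrow> ((nat \<Rightarrow> nat) \<Rightarrow> real) \<Rightarrow> real" where
  "Ex n T p f = (\<Sum>\<omega>\<in>PiE {1..T} (\<lambda>_. {..<n}). (\<Prod>t\<in>{1..T}. p (\<omega> t)) * f \<omega>)"

end

theory Submission
  imports Defs
begin

text \<open>
  The realised cost is the sum of the costs incurred in the single epochs, and the proxy cost
  of epoch k is the cost incurred in epoch k plus the cost of the plan that the proxy decisions
  of epoch k make for the later epochs. Cutting each arrival type's row of that plan down to the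
  number of arrivals of this type in epoch k+1 turns it into a feasible plan of the proxy offline
  problem of epoch k+1; as costs are linear and penalties Lipschitz, the cut costs at most
  (K sum|c| + K^2 L) times sum_j |Lambda_j(epoch k) - Lambda_j(epoch k+1)|. Hence the proxy
  regrets telescope to V^pi <= V^off_1 + sum_k Reg_k + error. The two arrival counts are sums of
  T/K i.i.d. indicators, so by Cauchy-Schwarz the mean of their difference is at most sqrt(2T/K);
  summing over k and j bounds the expected error by a multiple of K^3 sqrt(T/K) = K^(5/2) sqrt T.
\<close>

section \<open>Expectation over i.i.d. arrivals\<close>

lemma Ex_add: "Ex n T p (\<lambda>\<omega>. f \<omega> + g \<omega>) = Ex n T p f + Ex n T p g"
  unfolding Ex_def by (simp add: distrib_left sum.distrib)

lemma Ex_cmult: "Ex n T p (\<lambda>\<omega>. a * f \<omega>) = a * Ex n T p f"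
  unfolding Ex_def by (simp add: sum_distrib_left mult.left_commute)

lemma Ex_sum: "finite I \<Longrightarrow> Ex n T p (\<lambda>\<omega>. \<Sum>i\<in>I. f i \<omega>) = (\<Sum>i\<in>I. Ex n T p (f i))"
  by (induction I rule: finite_induct) (auto simp: Ex_add, simp add: Ex_def)

lemma Ex_mono:
  assumes "\<forall>j<n. 0 \<le> p j" and "\<And>\<omega>. \<omega> \<in> PiE {1..T} (\<lambda>_. {..<n}) \<Longrightarrow> f \<omega> \<le> g \<omega>"
  shows "Ex n T p f \<le> Ex n T p g"
  unfolding Ex_def
proof (rule sum_mono)
  fix \<omega> assume \<omega>: "\<omega> \<in> PiE {1..T} (\<lambda>_. {..<n})"
  have "0 \<le> (\<Prod>t\<in>{1..T}. p (\<omega> t))"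
    using \<omega> assms(1) by (intro prod_nonneg) (auto simp: PiE_iff)
  then show "(\<Prod>t\<in>{1..T}. p (\<omega> t)) * f \<omega> \<le> (\<Prod>t\<in>{1..T}. p (\<omega> t)) * g \<omega>"
    using assms(2)[OF \<omega>] by (rule mult_left_mono[rotated])
qed

lemma Ex_prod: "Ex n T p (\<lambda>\<omega>. \<Prod>t\<in>{1..T}. h t (\<omega> t)) = (\<Prod>t\<in>{1..T}. \<Sum>v<n. p v * h t v)"
  unfolding Ex_def using prod_sum_PiE[of "{1..T}" "\<lambda>_. {..<n}" "\<lambda>t v. p v * h t v"]
  by (simp add: prod.distrib)

lemma Ex_const:
  assumes "(\<Sum>j<n. p j) = 1"
  shows "Ex n T p (\<lambda>\<omega>. a) = a"
  using Ex_prod[of n T p "\<lambda>_ _. 1"] Ex_cmult[of n T p a "\<lambda>_. 1"] assms by simp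

lemma Ex_abs_le_sqrt_Ex_square:
  assumes p_nonneg: "\<forall>j<n. 0 \<le> p j" and p_sum: "(\<Sum>j<n. p j) = 1"
  shows "Ex n T p (\<lambda>\<omega>. \<bar>f \<omega>\<bar>) \<le> sqrt (Ex n T p (\<lambda>\<omega>. (f \<omega>)\<^sup>2))"
proof -
  define \<Omega> where "\<Omega> = PiE {1..T} (\<lambda>_. {..<n})"
  define w where "w \<omega> = (\<Prod>t\<in>{1..T}. p (\<omega> t))" for \<omega>
  have w_nonneg: "0 \<le> w \<omega>" if "\<omega> \<in> \<Omega>" for \<omega>
    using that p_nonneg by (auto simp: w_def \<Omega>_def PiE_iff intro: prod_nonneg)
  have Ex_eq: "Ex n T p h = (\<Sum>\<omega>\<in>\<Omega>. w \<omega> * h \<omega>)" for h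
    by (simp add: Ex_def w_def \<Omega>_def)
  have "(Ex n T p (\<lambda>\<omega>. \<bar>f \<omega>\<bar>))\<^sup>2
      = (\<Sum>\<omega>\<in>\<Omega>. sqrt (w \<omega>) * (sqrt (w \<omega>) * \<bar>f \<omega>\<bar>))\<^sup>2"
    using w_nonneg by (simp add: Ex_eq mult.assoc[symmetric])
  also have "\<dots> \<le> (\<Sum>\<omega>\<in>\<Omega>. (sqrt (w \<omega>))\<^sup>2) * (\<Sum>\<omega>\<in>\<Omega>. (sqrt (w \<omega>) * \<bar>f \<omega>\<bar>)\<^sup>2)"
    by (rule Cauchy_Schwarz_ineq_sum)
  also have "\<dots> = Ex n T p (\<lambda>_. 1) * Ex n T p (\<lambda>\<omega>. (f \<omega>)\<^sup>2)"
    using w_nonneg by (simp add: Ex_eq power_mult_distrib)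
  also have "\<dots> = Ex n T p (\<lambda>\<omega>. (f \<omega>)\<^sup>2)"
    by (simp add: Ex_const[OF p_sum])
  finally show ?thesis
    by (simp add: real_le_rsqrt)
qed

lemma Ex_coordinate:
  assumes p_sum: "(\<Sum>j<n. p j) = 1" and s: "s \<in> {1..T}"
  shows "Ex n T p (\<lambda>\<omega>. a (\<omega> s)) = (\<Sum>v<n. p v * a v)"
proof -
  have "Ex n T p (\<lambda>\<omega>. a (\<omega> s)) = Ex n T p (\<lambda>\<omega>. \<Prod>u\<in>{1..T}. if u = s then a (\<omega> u) else 1)"
    using s by simp
  also have "\<dots> = (\<Prod>u\<in>{1..T}. \<Sum>v<n. p v * (if u = s then a v else 1))"
    by (rule Ex_prod)
  also have "\<dots> = (\<Prod>u\<in>{1..T}. if u = s then (\<Sum>v<n. p v * a v) else 1)"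
    using p_sum by (intro prod.cong) auto
  also have "\<dots> = (\<Sum>v<n. p v * a v)"
    using s by simp
  finally show ?thesis .
qed

lemma Ex_two_coordinates:
  assumes p_sum: "(\<Sum>j<n. p j) = 1" and "s \<in> {1..T}" "t \<in> {1..T}" "s \<noteq> t"
  shows "Ex n T p (\<lambda>\<omega>. a (\<omega> s) * b (\<omega> t)) = (\<Sum>v<n. p v * a v) * (\<Sum>v<n. p v * b v)"
proof -
  have "Ex n T p (\<lambda>\<omega>. a (\<omega> s) * b (\<omega> t))
      = Ex n T p (\<lambda>\<omega>. \<Prod>u\<in>{1..T}. (if u = s then a (\<omega> u) else 1) * (if u = t then b (\<omega> u) else 1))"
    using assms by (simp add: prod.distrib)
  also have "\<dots> = (\<Prod>u\<in>{1..T}. \<Sum>v<n. p v * ((if u = s then a v else 1) * (if u = t then b v else 1)))"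
    by (rule Ex_prod)
  also have "\<dots> = (\<Prod>u\<in>{1..T}. (if u = s then (\<Sum>v<n. p v * a v) else 1)
                                * (if u = t then (\<Sum>v<n. p v * b v) else 1))"
    using p_sum assms(4) by (intro prod.cong) auto
  also have "\<dots> = (\<Sum>v<n. p v * a v) * (\<Sum>v<n. p v * b v)"
    using assms by (simp add: prod.distrib)
  finally show ?thesis .
qed

lemma Ex_square_weighted_sum:
  assumes p_sum: "(\<Sum>j<n. p j) = 1" and U: "U \<subseteq> {1..T}"
    and mean_zero: "(\<Sum>v<n. p v * Y v) = 0"
  shows "Ex n T p (\<lambda>\<omega>. (\<Sum>s\<in>U. e s * Y (\<omega> s))\<^sup>2) = (\<Sum>v<n. p v * (Y v)\<^sup>2) * (\<Sum>s\<in>U. (e s)\<^sup>2)"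
proof -
  have fin: "finite U" using U finite_subset by blast
  have cov: "Ex n T p (\<lambda>\<omega>. Y (\<omega> s) * Y (\<omega> t)) = (if s = t then (\<Sum>v<n. p v * (Y v)\<^sup>2) else 0)"
    if "s \<in> U" "t \<in> U" for s t
  proof (cases "s = t")
    case True
    then show ?thesis
      using that U Ex_coordinate[OF p_sum, of s T "\<lambda>v. (Y v)\<^sup>2"] by (auto simp: power2_eq_square)
  next
    case False
    have "s \<in> {1..T}" "t \<in> {1..T}"
      using that U by auto
    then show ?thesis
      using False Ex_two_coordinates[OF p_sum, of s T t Y Y] mean_zero by simp
  qed
  have "Ex n T p (\<lambda>\<omega>. (\<Sum>s\<in>U. e s * Y (\<omega> s))\<^sup>2)
      = Ex n T p (\<lambda>\<omega>. \<Sum>s\<in>U. \<Sum>t\<in>U. (e s * e t) * (Y (\<omega> s) * Y (\<omega> t)))"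
    by (simp add: power2_eq_square sum_product mult_ac)
  also have "\<dots> = (\<Sum>s\<in>U. \<Sum>t\<in>U. (e s * e t) * Ex n T p (\<lambda>\<omega>. Y (\<omega> s) * Y (\<omega> t)))"
    using fin by (simp add: Ex_sum Ex_cmult)
  also have "\<dots> = (\<Sum>s\<in>U. (e s)\<^sup>2 * (\<Sum>v<n. p v * (Y v)\<^sup>2))"
    using fin by (simp add: cov if_distrib power2_eq_square cong: if_cong)
  finally show ?thesis
    by (simp add: sum_distrib_right mult_ac)
qed

lemma real_card_filter: "finite A \<Longrightarrow> real (card {s\<in>A. P s}) = (\<Sum>s\<in>A. if P s then 1 else 0)"
  by (simp flip: sum.inter_filter)

lemma centered_indicator_moments:
  fixes p :: "nat \<Rightarrow> real"
  assumes p_sum: "(\<Sum>j<n. p j) = 1" and "j < n"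
  shows "(\<Sum>v<n. p v * ((if v = j then 1 else 0) - p j)) = 0"
    and "(\<Sum>v<n. p v * ((if v = j then 1 else 0) - p j)\<^sup>2) \<le> 1"
proof -
  define Y where "Y v = (if v = j then 1 else 0) - p j" for v
  have pick_j: "(\<Sum>v<n. p v * (if v = j then x else 0)) = p j * x" for x
    using \<open>j < n\<close> by (simp add: if_distrib[of "\<lambda>y. p _ * y"] cong: if_cong)
  show mean_zero: "(\<Sum>v<n. p v * ((if v = j then 1 else 0) - p j)) = 0"
    using p_sum pick_j[of 1] by (simp add: right_diff_distrib sum_subtractf flip: sum_distrib_right)
  have "(Y v)\<^sup>2 = (if v = j then 1 - p j else 0) - p j * Y v" for v
    by (simp add: Y_def power2_eq_square algebra_simps)
  then have "(\<Sum>v<n. p v * (Y v)\<^sup>2) = p j * (1 - p j) - p j * (\<Sum>v<n. p v * Y v)"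
    by (simp add: pick_j right_diff_distrib sum_subtractf sum_distrib_left mult.left_commute)
  also have "\<dots> = p j - (p j)\<^sup>2"
    using mean_zero by (simp add: Y_def power2_eq_square algebra_simps)
  also have "\<dots> \<le> 1"
    using zero_le_power2[of "p j - 1"] zero_le_power2[of "p j"]
    unfolding power2_diff power_one mult_1_right by linarith
  finally show "(\<Sum>v<n. p v * ((if v = j then 1 else 0) - p j)\<^sup>2) \<le> 1"
    by (simp add: Y_def)
qed

lemma Ex_abs_count_difference_le:
  assumes p_nonneg: "\<forall>j<n. 0 \<le> p j" and p_sum: "(\<Sum>j<n. p j) = 1" and "j < n"
    and AB: "A \<union> B \<subseteq> {1..T}" "A \<inter> B = {}" "card A = card B"
  shows "Ex n T p (\<lambda>\<omega>. \<bar>real (card {s\<in>A. \<omega> s = j}) - real (card {s\<in>B. \<omega> s = j})\<bar>)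
           \<le> sqrt (2 * real (card A))"
proof -
  define Y where "Y v = (if v = j then 1 else 0) - p j" for v
  define e where "e s = (if s \<in> A then 1 else - 1 :: real)" for s
  have fin: "finite A" "finite B"
    using AB(1) finite_subset by auto
  note moments = centered_indicator_moments[OF p_sum \<open>j < n\<close>, folded Y_def]
  have count_eq: "real (card {s\<in>A. \<omega> s = j}) - real (card {s\<in>B. \<omega> s = j})
      = (\<Sum>s\<in>A \<union> B. e s * Y (\<omega> s))" for \<omega>
  proof -
    have "(\<Sum>s\<in>B. e s * Y (\<omega> s)) = (\<Sum>s\<in>B. - Y (\<omega> s))"
      using AB(2) by (auto simp: e_def intro!: sum.cong)
    then have "(\<Sum>s\<in>A \<union> B. e s * Y (\<omega> s)) = (\<Sum>s\<in>A. Y (\<omega> s)) - (\<Sum>s\<in>B. Y (\<omega> s))"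
      using fin AB(2) by (simp add: sum.union_disjoint e_def sum_negf)
    then show ?thesis
      using fin AB(3) by (simp add: Y_def sum_subtractf real_card_filter)
  qed
  have "(e s)\<^sup>2 = 1" for s
    by (simp add: e_def)
  then have "Ex n T p (\<lambda>\<omega>. (\<Sum>s\<in>A \<union> B. e s * Y (\<omega> s))\<^sup>2) = (\<Sum>v<n. p v * (Y v)\<^sup>2) * real (card (A \<union> B))"
    using Ex_square_weighted_sum[OF p_sum AB(1) moments(1), of e] by simp
  also have "\<dots> \<le> 2 * real (card A)"
    using mult_right_mono[OF moments(2), of "real (card (A \<union> B))"] fin AB by (simp add: card_Un_disjoint)
  finally show ?thesis
    using Ex_abs_le_sqrt_Ex_square[OF p_nonneg p_sum, of T "\<lambda>\<omega>. \<Sum>s\<in>A \<union> B. e s * Y (\<omega> s)"]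
    by (simp add: count_eq order_trans real_sqrt_le_mono)
qed

section \<open>Epochs\<close>

lemma finite_epoch: "finite (epoch T K k)"
  by (simp add: epoch_def)

locale epochs =
  fixes K T d :: nat
  assumes K_pos: "1 \<le> K" and T_eq: "T = K * d" and d_pos: "1 \<le> d"
begin

lemma T_div_K: "T div K = d"
  using K_pos T_eq by simp

lemma real_T_div_K: "real T / real K = real d"
  using K_pos T_eq by simp

lemma epoch_eq: "epoch T K k = {(k - 1) * d + 1 .. k * d}"
  unfolding epoch_def T_div_K ..

lemma card_epoch: "1 \<le> k \<Longrightarrow> card (epoch T K k) = d"
  unfolding epoch_eq by (cases k) (auto simp: algebra_simps)

lemma ep_epoch:
  assumes "1 \<le> k" "t \<in> epoch T K k"
  shows "ep T K t = k"
proof -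
  have t: "(k - 1) * d + 1 \<le> t" "t \<le> k * d"
    using assms(2) by (auto simp: epoch_eq)
  have "(t - 1) div d = k - 1"
  proof (rule div_nat_eqI)
    show "d * (k - 1) \<le> t - 1"
      using t by (simp add: mult.commute)
    have "k * d = d * Suc (k - 1)"
      using assms(1) by (cases k) auto
    then show "t - 1 < d * Suc (k - 1)"
      using t d_pos by linarith
  qed
  then show ?thesis
    unfolding ep_def T_div_K using assms(1) by simp
qed

lemma ep_le_K: "t \<in> {1..T} \<Longrightarrow> ep T K t \<le> K"
  using K_pos T_eq d_pos by (auto simp: ep_def T_div_K less_Suc_eq_le[symmetric] div_less_iff_less_mult)

lemma epoch_subset: "1 \<le> k \<Longrightarrow> k \<le> K \<Longrightarrow> epoch T K k \<subseteq> {1..T}"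
  using mult_le_mono1[of k K d] unfolding epoch_eq unfolding T_eq by auto

lemma epoch_disjoint_Suc: "1 \<le> k \<Longrightarrow> epoch T K k \<inter> epoch T K (Suc k) = {}"
  by (cases k) (auto simp: epoch_eq)

lemma prefix_epoch_split:
  assumes "1 \<le> k"
  shows "{1..k * d} = {1..(k - 1) * d} \<union> epoch T K k" "{1..(k - 1) * d} \<inter> epoch T K k = {}"
  using assms by (cases k; auto simp: epoch_eq)+

lemma Ex_abs_Lam_diff_le:
  assumes "\<forall>j<n. 0 \<le> p j" "(\<Sum>j<n. p j) = 1" "j < n" "1 \<le> k" "Suc k \<le> K"
  shows "Ex n T p (\<lambda>\<omega>. \<bar>real (Lam T K \<omega> k j) - real (Lam T K \<omega> (Suc k) j)\<bar>) \<le> sqrt (2 * real d)"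
  using Ex_abs_count_difference_le[OF assms(1-3), of "epoch T K k" "epoch T K (Suc k)" T]
    epoch_subset[of k] epoch_subset[of "Suc k"] epoch_disjoint_Suc[of k] card_epoch[of k] card_epoch[of "Suc k"]
    assms(4,5)
  by (simp add: Lam_def)

end

section \<open>The proxy offline problem\<close>

lemma finite_offfeas: "finite (offfeas m n S K k lam)"
proof -
  define B where "B = (\<Sum>j<n. lam j)"
  define F1 where "F1 = {h :: nat \<Rightarrow> nat. \<forall>i. (i \<in> {..<m} \<longrightarrow> h i \<in> {..B}) \<and> (i \<notin> {..<m} \<longrightarrow> h i = 0)}"
  define F2 where "F2 = {h. \<forall>j. (j \<in> {..<n} \<longrightarrow> h j \<in> F1) \<and> (j \<notin> {..<n} \<longrightarrow> h j = (\<lambda>_. 0))}"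
  define F3 where "F3 = {Z. \<forall>k'. (k' \<in> {..K} \<longrightarrow> Z k' \<in> F2) \<and> (k' \<notin> {..K} \<longrightarrow> Z k' = (\<lambda>_ _. 0))}"
  have "finite F3"
    unfolding F3_def F2_def F1_def by (intro finite_set_of_finite_funs finite_lessThan finite_atMost)
  moreover have "offfeas m n S K k lam \<subseteq> F3"
  proof
    fix Z assume Z: "Z \<in> offfeas m n S K k lam"
    have bounded: "Z k' j i \<le> B" for k' j i
    proof (cases "Z k' j i = 0")
      case False
      then have "k \<le> k'" "k' \<le> K" "j < n" "i < m"
        using Z by (auto simp: offfeas_def)
      then have "Z k' j i \<le> (\<Sum>i<m. Z k' j i)" "(\<Sum>i<m. Z k' j i) \<le> lam j" "lam j \<le> B"
        using Z by (auto simp: offfeas_def B_def intro!: member_le_sum)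
      then show ?thesis by linarith
    qed simp
    have "Z k' j i = 0" if "\<not> (k' \<le> K \<and> j < n \<and> i < m)" for k' j i
      using Z that by (auto simp: offfeas_def)
    then show "Z \<in> F3"
      using bounded by (auto simp: F3_def F2_def F1_def fun_eq_iff)
  qed
  ultimately show ?thesis
    by (rule finite_subset[rotated])
qed

lemma Voff_le_offobj:
  "Z \<in> offfeas m n S K k (Lam T K \<omega> k) \<Longrightarrow> Voff m n c S g K T \<omega> k z \<le> offobj m n c g K T k z Z"
  unfolding Voff_def using finite_offfeas by (intro Min_le finite_imageI) auto

definition greedy_trunc :: "(nat \<Rightarrow> nat) \<Rightarrow> nat \<Rightarrow> nat \<Rightarrow> nat" where
  "greedy_trunc f B i = min (f i) (B - sum f {..<i})"

lemma sum_greedy_trunc: "(\<Sum>i<M. greedy_trunc f B i) = min (\<Sum>i<M. f i) B"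
  by (induction M) (auto simp: greedy_trunc_def)

lemma greedy_trunc_le: "greedy_trunc f B i \<le> f i"
  by (simp add: greedy_trunc_def)

lemma scaled_lipschitz_le:
  fixes f :: "real \<Rightarrow> real"
  assumes "L-lipschitz_on {0..1} f" "0 < r" "0 \<le> z + a'" "a' \<le> a" "(z + a) / r \<le> 1"
  shows "r * f ((z + a') / r) \<le> r * f ((z + a) / r) + \<bar>L\<bar> * (a - a')"
proof -
  have "dist (f ((z + a') / r)) (f ((z + a) / r)) \<le> L * dist ((z + a') / r) ((z + a) / r)"
    using assms by (intro lipschitz_onD) (auto simp: divide_right_mono)
  also have "dist ((z + a') / r) ((z + a) / r) = (a - a') / r"
    using assms(2,4) by (simp add: dist_real_def field_simps)
  finally have "f ((z + a') / r) - f ((z + a) / r) \<le> L * (a - a') / r"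
    by (simp add: dist_real_def)
  then have "r * f ((z + a') / r) - r * f ((z + a) / r) \<le> L * (a - a')"
    using assms(2) by (simp add: field_simps)
  also have "\<dots> \<le> \<bar>L\<bar> * (a - a')"
    using assms(4) by (intro mult_right_mono) auto
  finally show ?thesis
    by simp
qed

lemma sum_shortfall_le:
  fixes D :: "nat \<Rightarrow> nat \<Rightarrow> real"
  assumes "\<forall>k'\<in>{k1..k2}. \<forall>j<n. D k' j \<le> \<delta> j" "\<forall>j<n. 0 \<le> \<delta> j" "1 \<le> k1" "k2 \<le> K"
  shows "(\<Sum>k'=k1..k2. \<Sum>j<n. D k' j) \<le> real K * (\<Sum>j<n. \<delta> j)"
proof -
  have "(\<Sum>k'=k1..k2. \<Sum>j<n. D k' j) \<le> (\<Sum>k'=k1..k2. \<Sum>j<n. \<delta> j)"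
    using assms(1) by (intro sum_mono) auto
  also have "\<dots> = real (card {k1..k2}) * (\<Sum>j<n. \<delta> j)"
    by simp
  also have "\<dots> \<le> real K * (\<Sum>j<n. \<delta> j)"
    using assms(2-4) by (intro mult_right_mono sum_nonneg) auto
  finally show ?thesis .
qed

lemma abs_le_sum_abs:
  fixes c :: "nat \<Rightarrow> nat \<Rightarrow> real"
  assumes "j < n" "i < m"
  shows "\<bar>c j i\<bar> \<le> (\<Sum>j<n. \<Sum>i<m. \<bar>c j i\<bar>)"
proof -
  have "\<bar>c j i\<bar> \<le> (\<Sum>i<m. \<bar>c j i\<bar>)"
    using assms by (intro member_le_sum[of i "{..<m}" "\<lambda>i. \<bar>c j i\<bar>"]) auto
  also have "\<dots> \<le> (\<Sum>j<n. \<Sum>i<m. \<bar>c j i\<bar>)"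
    using assms by (intro member_le_sum[of j "{..<n}" "\<lambda>j. \<Sum>i<m. \<bar>c j i\<bar>"] sum_nonneg) auto
  finally show ?thesis .
qed

lemma offobj_cost_le:
  fixes P P' :: "nat \<Rightarrow> nat \<Rightarrow> nat \<Rightarrow> nat"
  assumes le: "\<forall>k' j i. P' k' j i \<le> P k' j i"
    and shortfall: "\<forall>k'\<in>{k1..K}. \<forall>j<n. real (\<Sum>i<m. P k' j i) - real (\<Sum>i<m. P' k' j i) \<le> \<delta> j"
    and \<delta>_nonneg: "\<forall>j<n. 0 \<le> \<delta> j" and "1 \<le> k1"
  shows "(\<Sum>j<n. \<Sum>i<m. c j i * real (\<Sum>k'=k1..K. P' k' j i))
       \<le> (\<Sum>j<n. \<Sum>i<m. c j i * real (\<Sum>k'=k1..K. P k' j i))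
         + (\<Sum>j<n. \<Sum>i<m. \<bar>c j i\<bar>) * real K * (\<Sum>j<n. \<delta> j)"
proof -
  define cS where "cS = (\<Sum>j<n. \<Sum>i<m. \<bar>c j i\<bar>)"
  define D where "D k' j i = real (P k' j i) - real (P' k' j i)" for k' j i
  have D_nonneg: "0 \<le> D k' j i" for k' j i
    using le by (simp add: D_def)
  have entry: "c j i * real (P' k' j i) \<le> c j i * real (P k' j i) + cS * D k' j i"
    if "j < n" "i < m" for j i k'
  proof -
    have "c j i * real (P' k' j i) - c j i * real (P k' j i) = - c j i * D k' j i"
      by (simp add: D_def algebra_simps)
    also have "\<dots> \<le> \<bar>c j i\<bar> * D k' j i"
      by (rule mult_right_mono[OF abs_ge_minus_self D_nonneg])
    also have "\<dots> \<le> cS * D k' j i"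
      using abs_le_sum_abs[OF that, of c] D_nonneg by (intro mult_right_mono) (auto simp: cS_def)
    finally show ?thesis by simp
  qed
  have "(\<Sum>j<n. \<Sum>i<m. c j i * real (\<Sum>k'=k1..K. P' k' j i))
      \<le> (\<Sum>j<n. \<Sum>i<m. \<Sum>k'=k1..K. c j i * real (P k' j i) + cS * D k' j i)"
    using entry by (simp add: sum_distrib_left) (intro sum_mono, auto)
  also have "\<dots> = (\<Sum>j<n. \<Sum>i<m. c j i * real (\<Sum>k'=k1..K. P k' j i))
      + cS * (\<Sum>j<n. \<Sum>i<m. \<Sum>k'=k1..K. D k' j i)"
    by (simp add: sum.distrib sum_distrib_left)
  finally have split: "(\<Sum>j<n. \<Sum>i<m. c j i * real (\<Sum>k'=k1..K. P' k' j i))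
      \<le> (\<Sum>j<n. \<Sum>i<m. c j i * real (\<Sum>k'=k1..K. P k' j i))
        + cS * (\<Sum>j<n. \<Sum>i<m. \<Sum>k'=k1..K. D k' j i)" .
  have "(\<Sum>j<n. \<Sum>i<m. \<Sum>k'=k1..K. D k' j i) = (\<Sum>j<n. \<Sum>k'=k1..K. \<Sum>i<m. D k' j i)"
    by (intro sum.cong refl sum.swap)
  also have "\<dots> = (\<Sum>k'=k1..K. \<Sum>j<n. \<Sum>i<m. D k' j i)"
    by (rule sum.swap)
  also have "\<dots> \<le> real K * (\<Sum>j<n. \<delta> j)"
    using shortfall \<delta>_nonneg \<open>1 \<le> k1\<close>
    by (intro sum_shortfall_le) (auto simp: D_def sum_subtractf)
  finally have "cS * (\<Sum>j<n. \<Sum>i<m. \<Sum>k'=k1..K. D k' j i) \<le> cS * (real K * (\<Sum>j<n. \<delta> j))"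
    by (intro mult_left_mono) (auto simp: cS_def intro: sum_nonneg)
  with split show ?thesis
    by (simp add: cS_def mult.assoc)
qed

lemma sum_cumulative_shortfall_le:
  fixes P P' :: "nat \<Rightarrow> nat \<Rightarrow> nat \<Rightarrow> nat"
  assumes shortfall: "\<forall>k'\<in>{k1..K}. \<forall>j<n. real (\<Sum>i<m. P k' j i) - real (\<Sum>i<m. P' k' j i) \<le> \<delta> j"
    and \<delta>_nonneg: "\<forall>j<n. 0 \<le> \<delta> j" and k1: "1 \<le> k1"
  shows "(\<Sum>k'=k1..K. \<Sum>i<m. real (\<Sum>j<n. \<Sum>k''=k1..k'. P k'' j i) - real (\<Sum>j<n. \<Sum>k''=k1..k'. P' k'' j i))
           \<le> real K * real K * (\<Sum>j<n. \<delta> j)"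
proof -
  have "(\<Sum>i<m. real (\<Sum>j<n. \<Sum>k''=k1..k'. P k'' j i) - real (\<Sum>j<n. \<Sum>k''=k1..k'. P' k'' j i))
      = (\<Sum>k''=k1..k'. \<Sum>j<n. real (\<Sum>i<m. P k'' j i) - real (\<Sum>i<m. P' k'' j i))" for k'
  proof -
    have "(\<Sum>i<m. real (\<Sum>j<n. \<Sum>k''=k1..k'. P k'' j i) - real (\<Sum>j<n. \<Sum>k''=k1..k'. P' k'' j i))
        = (\<Sum>i<m. \<Sum>j<n. \<Sum>k''=k1..k'. real (P k'' j i) - real (P' k'' j i))"
      by (simp add: sum_subtractf)
    also have "\<dots> = (\<Sum>j<n. \<Sum>i<m. \<Sum>k''=k1..k'. real (P k'' j i) - real (P' k'' j i))"
      by (rule sum.swap)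
    also have "\<dots> = (\<Sum>j<n. \<Sum>k''=k1..k'. \<Sum>i<m. real (P k'' j i) - real (P' k'' j i))"
      by (intro sum.cong refl sum.swap)
    also have "\<dots> = (\<Sum>k''=k1..k'. \<Sum>j<n. \<Sum>i<m. real (P k'' j i) - real (P' k'' j i))"
      by (rule sum.swap)
    finally show ?thesis
      by (simp add: sum_subtractf)
  qed
  then have "(\<Sum>k'=k1..K. \<Sum>i<m. real (\<Sum>j<n. \<Sum>k''=k1..k'. P k'' j i) - real (\<Sum>j<n. \<Sum>k''=k1..k'. P' k'' j i))
      \<le> (\<Sum>k'=k1..K. real K * (\<Sum>j<n. \<delta> j))"
    using shortfall \<delta>_nonneg k1 by (simp only:) (intro sum_mono sum_shortfall_le, auto)
  also have "\<dots> \<le> real K * (real K * (\<Sum>j<n. \<delta> j))"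
    using \<delta>_nonneg k1 by (simp add: sum_nonneg) (intro mult_right_mono mult_nonneg_nonneg sum_nonneg, auto)
  finally show ?thesis
    by (simp add: mult.assoc)
qed

lemma offobj_penalty_le:
  fixes P P' :: "nat \<Rightarrow> nat \<Rightarrow> nat \<Rightarrow> nat" and g :: "nat \<Rightarrow> nat \<Rightarrow> real \<Rightarrow> real"
  assumes le: "\<forall>k' j i. P' k' j i \<le> P k' j i"
    and shortfall: "\<forall>k'\<in>{k1..K}. \<forall>j<n. real (\<Sum>i<m. P k' j i) - real (\<Sum>i<m. P' k' j i) \<le> \<delta> j"
    and \<delta>_nonneg: "\<forall>j<n. 0 \<le> \<delta> j" and k1: "1 \<le> k1"
    and args: "\<forall>k'\<in>{k1..K}. \<forall>i<m.
                 (z i + real (\<Sum>j<n. \<Sum>k''=k1..k'. P k'' j i)) / (real k' * real T / real K) \<le> 1"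
    and z_nonneg: "\<forall>i<m. 0 \<le> z i"
    and lip: "\<forall>k'\<in>{k1..K}. \<forall>i<m. L-lipschitz_on {0..1} (g k' i)"
    and TK: "0 < real T / real K"
  shows "real T / real K * (\<Sum>k'=k1..K. \<Sum>i<m. real k' *
            g k' i ((z i + real (\<Sum>j<n. \<Sum>k''=k1..k'. P' k'' j i)) / (real k' * real T / real K)))
       \<le> real T / real K * (\<Sum>k'=k1..K. \<Sum>i<m. real k' *
            g k' i ((z i + real (\<Sum>j<n. \<Sum>k''=k1..k'. P k'' j i)) / (real k' * real T / real K)))
         + \<bar>L\<bar> * real K * real K * (\<Sum>j<n. \<delta> j)"
proof -
  define A where "A P k' i = real (\<Sum>j<n. \<Sum>k''=k1..k'. P k'' j i)" for P :: "nat \<Rightarrow> nat \<Rightarrow> nat \<Rightarrow> nat" and k' i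
  define den where "den k' = real k' * real T / real K" for k'
  have entry: "real T / real K * (real k' * g k' i ((z i + A P' k' i) / den k'))
      \<le> real T / real K * (real k' * g k' i ((z i + A P k' i) / den k')) + \<bar>L\<bar> * (A P k' i - A P' k' i)"
    if k': "k' \<in> {k1..K}" and i: "i < m" for k' i
  proof -
    have "0 < den k'"
      using mult_pos_pos[OF _ TK, of "real k'"] k' k1 by (simp add: den_def)
    moreover have "A P' k' i \<le> A P k' i"
      unfolding A_def of_nat_le_iff using le by (intro sum_mono) auto
    moreover have "0 \<le> z i + A P' k' i"
      using z_nonneg i by (auto simp: A_def intro!: add_nonneg_nonneg sum_nonneg)
    ultimately have "den k' * g k' i ((z i + A P' k' i) / den k')
        \<le> den k' * g k' i ((z i + A P k' i) / den k') + \<bar>L\<bar> * (A P k' i - A P' k' i)"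
      using lip args k' i by (intro scaled_lipschitz_le) (auto simp: A_def den_def)
    moreover have "real T / real K * (real k' * x) = den k' * x" for x
      by (simp add: den_def)
    ultimately show ?thesis
      by simp
  qed
  have "real T / real K * (\<Sum>k'=k1..K. \<Sum>i<m. real k' * g k' i ((z i + A P' k' i) / den k'))
      \<le> (\<Sum>k'=k1..K. \<Sum>i<m. real T / real K * (real k' * g k' i ((z i + A P k' i) / den k'))
            + \<bar>L\<bar> * (A P k' i - A P' k' i))"
    unfolding sum_distrib_left using entry by (intro sum_mono) auto
  also have "\<dots> = real T / real K * (\<Sum>k'=k1..K. \<Sum>i<m. real k' * g k' i ((z i + A P k' i) / den k'))
      + \<bar>L\<bar> * (\<Sum>k'=k1..K. \<Sum>i<m. A P k' i - A P' k' i)"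
    by (simp add: sum.distrib sum_distrib_left)
  finally show ?thesis
    using mult_left_mono[OF sum_cumulative_shortfall_le[OF shortfall \<delta>_nonneg k1], of "\<bar>L\<bar>"]
    by (simp add: A_def den_def mult_ac)
qed

lemma offobj_le_of_shortfall:
  fixes P P' :: "nat \<Rightarrow> nat \<Rightarrow> nat \<Rightarrow> nat" and g :: "nat \<Rightarrow> nat \<Rightarrow> real \<Rightarrow> real"
  assumes "\<forall>k' j i. P' k' j i \<le> P k' j i"
    and "\<forall>k'\<in>{k1..K}. \<forall>j<n. real (\<Sum>i<m. P k' j i) - real (\<Sum>i<m. P' k' j i) \<le> \<delta> j"
    and "\<forall>j<n. 0 \<le> \<delta> j" and "1 \<le> k1"
    and "\<forall>k'\<in>{k1..K}. \<forall>i<m.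
           (z i + real (\<Sum>j<n. \<Sum>k''=k1..k'. P k'' j i)) / (real k' * real T / real K) \<le> 1"
    and "\<forall>i<m. 0 \<le> z i"
    and "\<forall>k'\<in>{k1..K}. \<forall>i<m. L-lipschitz_on {0..1} (g k' i)"
    and "0 < real T / real K"
  shows "offobj m n c g K T k1 z P' \<le> offobj m n c g K T k1 z P
           + ((\<Sum>j<n. \<Sum>i<m. \<bar>c j i\<bar>) * real K + \<bar>L\<bar> * real K * real K) * (\<Sum>j<n. \<delta> j)"
  using offobj_cost_le[OF assms(1-4), of c] offobj_penalty_le[OF assms]
  unfolding offobj_def by (simp add: distrib_right)

section \<open>Trajectory of the algorithm\<close>

lemma Zt_single:
  "Zt K T selX \<omega> k k' k' j i = (\<Sum>t\<in>epoch T K k. if \<omega> t = j then selX t (hist \<omega> t) k' i else 0)"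
  unfolding Zt_def atLeastAtMost_singleton by simp

lemma Zt_eq_sum_single:
  "Zt K T selX \<omega> k k1 k2 j i = (\<Sum>k''=k1..k2. Zt K T selX \<omega> k k'' k'' j i)"
  unfolding Zt_single unfolding Zt_def by (rule sum.swap)

lemma Lam_eq_sum: "Lam T K \<omega> k j = (\<Sum>t\<in>epoch T K k. if \<omega> t = j then 1 else 0)"
  unfolding Lam_def by (simp add: finite_epoch flip: sum.inter_filter)

lemma sum_atLeast1_atMost_shift:
  "1 \<le> K \<Longrightarrow> (\<Sum>k=1..K. f k) = f 1 + (\<Sum>k\<in>{1..<K}. f (Suc k))"
  by (induction K rule: dec_induct) (simp_all add: sum.atLeastLessThan_Suc add.assoc)

locale dgd_run = epochs K T d for K T d :: nat +
  fixes m n :: nat and c :: "nat \<Rightarrow> nat \<Rightarrow> real" and S :: "nat \<Rightarrow> nat set"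
    and g :: "nat \<Rightarrow> nat \<Rightarrow> real \<Rightarrow> real" and \<eta> :: real and \<mu>1 :: "nat \<Rightarrow> nat \<Rightarrow> real"
    and selX :: xsel and selA :: asel and \<omega> :: "nat \<Rightarrow> nat"
  assumes valid: "dgd_valid m c S g K T \<eta> \<mu>1 selX selA \<omega>"
begin

lemma proxy_decision_bounds:
  assumes "t \<in> {1..T}" "ep T K t \<le> k'" "k' \<le> K"
  shows "selX t (hist \<omega> t) k' i \<le> 1" "(\<Sum>i<m. selX t (hist \<omega> t) k' i) \<le> 1"
    "selX t (hist \<omega> t) k' i \<noteq> 0 \<Longrightarrow> i < m \<and> i \<in> S (\<omega> t)"
proof -
  have "selX t (hist \<omega> t) k' \<in> Xset m S (\<omega> t)"
    using valid assms unfolding dgd_valid_def Let_def by auto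
  then show "selX t (hist \<omega> t) k' i \<le> 1" "(\<Sum>i<m. selX t (hist \<omega> t) k' i) \<le> 1"
    "selX t (hist \<omega> t) k' i \<noteq> 0 \<Longrightarrow> i < m \<and> i \<in> S (\<omega> t)"
    unfolding Xset_def by (auto simp: not_le)
qed

lemma Zt_current_epoch:
  "1 \<le> k \<Longrightarrow> Zt K T selX \<omega> k k k j i = (\<Sum>t\<in>epoch T K k. if \<omega> t = j then xI K T selX \<omega> t i else 0)"
  unfolding Zt_single xI_def by (intro sum.cong refl) (simp add: ep_epoch)

lemma Zji_epoch_step:
  assumes "1 \<le> k"
  shows "Zji K T selX \<omega> j i (k * d) = Zji K T selX \<omega> j i ((k - 1) * d) + Zt K T selX \<omega> k k k j i"
  unfolding Zji_def prefix_epoch_split(1)[OF assms]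
  using prefix_epoch_split(2)[OF assms] assms by (simp add: sum.union_disjoint finite_epoch Zt_current_epoch)

lemma Zji_eq_sum_epochs: "Zji K T selX \<omega> j i (k * d) = (\<Sum>k'=1..k. Zt K T selX \<omega> k' k' k' j i)"
proof (induction k)
  case 0
  then show ?case by (simp add: Zji_def)
next
  case (Suc k)
  then show ?case using Zji_epoch_step[of "Suc k" j i] by simp
qed

lemma Zi_epoch_step:
  "1 \<le> k \<Longrightarrow> Zi n K T selX \<omega> i (k * d) = Zi n K T selX \<omega> i ((k - 1) * d) + (\<Sum>j<n. Zt K T selX \<omega> k k k j i)"
  unfolding Zi_def by (simp add: Zji_epoch_step sum.distrib)

lemma Zi_le:
  assumes "t \<le> T"
  shows "Zi n K T selX \<omega> i t \<le> t"
proof -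
  have "Zi n K T selX \<omega> i t = (\<Sum>s\<in>{1..t}. \<Sum>j<n. if \<omega> s = j then xI K T selX \<omega> s i else 0)"
    unfolding Zi_def Zji_def by (rule sum.swap)
  also have "\<dots> \<le> (\<Sum>s\<in>{1..t}. 1)"
  proof (rule sum_mono)
    fix s assume "s \<in> {1..t}"
    then have "xI K T selX \<omega> s i \<le> 1"
      using assms proxy_decision_bounds(1)[of s "ep T K s" i] ep_le_K[of s] by (simp add: xI_def)
    then show "(\<Sum>j<n. if \<omega> s = j then xI K T selX \<omega> s i else 0) \<le> 1"
      by (simp add: sum.If_cases)
  qed
  finally show ?thesis by simp
qed

lemma epoch_proxy_bounds:
  assumes "1 \<le> k" "k \<le> k'" "k' \<le> K" "t \<in> epoch T K k"
  shows "selX t (hist \<omega> t) k' i \<le> 1" "(\<Sum>i<m. selX t (hist \<omega> t) k' i) \<le> 1"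
    "selX t (hist \<omega> t) k' i \<noteq> 0 \<Longrightarrow> i < m \<and> i \<in> S (\<omega> t)"
proof -
  have "t \<in> {1..T}" "ep T K t \<le> k'"
    using assms epoch_subset[of k] ep_epoch[of k t] by auto
  then show "selX t (hist \<omega> t) k' i \<le> 1" "(\<Sum>i<m. selX t (hist \<omega> t) k' i) \<le> 1"
    "selX t (hist \<omega> t) k' i \<noteq> 0 \<Longrightarrow> i < m \<and> i \<in> S (\<omega> t)"
    using proxy_decision_bounds assms(3) by auto
qed

definition carry_plan :: "nat \<Rightarrow> nat \<Rightarrow> nat \<Rightarrow> nat \<Rightarrow> nat" where
  "carry_plan k k' j i = (if Suc k \<le> k' \<and> k' \<le> K \<and> j < n \<and> i < m then Zt K T selX \<omega> k k' k' j i else 0)"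

lemma Zt_split_carry_plan:
  assumes "k \<le> k'" "k' \<le> K" "j < n" "i < m"
  shows "Zt K T selX \<omega> k k k' j i = Zt K T selX \<omega> k k k j i + (\<Sum>k''=Suc k..k'. carry_plan k k'' j i)"
  using assms by (simp add: Zt_eq_sum_single[of K T selX \<omega> k k k'] sum.atLeast_Suc_atMost carry_plan_def)

lemma carry_plan_sum_resources_le:
  assumes "1 \<le> k"
  shows "(\<Sum>i<m. carry_plan k k' j i) \<le> Lam T K \<omega> k j"
proof (cases "Suc k \<le> k' \<and> k' \<le> K \<and> j < n")
  case True
  have "(\<Sum>i<m. carry_plan k k' j i) = (\<Sum>i<m. \<Sum>t\<in>epoch T K k. if \<omega> t = j then selX t (hist \<omega> t) k' i else 0)"
    using True by (simp add: carry_plan_def Zt_single)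
  also have "\<dots> = (\<Sum>t\<in>epoch T K k. \<Sum>i<m. if \<omega> t = j then selX t (hist \<omega> t) k' i else 0)"
    by (rule sum.swap)
  also have "\<dots> \<le> (\<Sum>t\<in>epoch T K k. if \<omega> t = j then 1 else 0)"
    using True assms epoch_proxy_bounds(2)[of k k'] by (intro sum_mono) auto
  finally show ?thesis
    by (simp add: Lam_eq_sum)
qed (auto simp: carry_plan_def)

lemma carry_plan_sum_types_le:
  assumes "1 \<le> k"
  shows "(\<Sum>j<n. carry_plan k k' j i) \<le> d"
proof (cases "Suc k \<le> k' \<and> k' \<le> K \<and> i < m")
  case True
  have "(\<Sum>j<n. carry_plan k k' j i) = (\<Sum>j<n. \<Sum>t\<in>epoch T K k. if \<omega> t = j then selX t (hist \<omega> t) k' i else 0)"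
    using True by (simp add: carry_plan_def Zt_single)
  also have "\<dots> = (\<Sum>t\<in>epoch T K k. \<Sum>j<n. if \<omega> t = j then selX t (hist \<omega> t) k' i else 0)"
    by (rule sum.swap)
  also have "\<dots> \<le> (\<Sum>t\<in>epoch T K k. 1)"
    using True assms epoch_proxy_bounds(1)[of k k' _ i] by (intro sum_mono) (auto simp: sum.If_cases)
  finally show ?thesis
    using card_epoch[OF assms] by simp
qed (auto simp: carry_plan_def)

lemma carry_plan_support:
  assumes "1 \<le> k" "carry_plan k k' j i \<noteq> 0"
  shows "Suc k \<le> k' \<and> k' \<le> K \<and> j < n \<and> i < m \<and> i \<in> S j"
proof -
  have range: "Suc k \<le> k' \<and> k' \<le> K \<and> j < n \<and> i < m"
    using assms(2) by (auto simp: carry_plan_def split: if_splits)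
  then have "(\<Sum>t\<in>epoch T K k. if \<omega> t = j then selX t (hist \<omega> t) k' i else 0) \<noteq> 0"
    using assms(2) by (simp add: carry_plan_def Zt_single)
  then obtain t where "t \<in> epoch T K k" "(if \<omega> t = j then selX t (hist \<omega> t) k' i else 0) \<noteq> 0"
    by (rule sum.not_neutral_contains_not_neutral)
  then show ?thesis
    using range assms(1) epoch_proxy_bounds(3)[of k k' t i] by (auto split: if_splits)
qed

definition epoch_cost :: "nat \<Rightarrow> real" where
  "epoch_cost k = (\<Sum>j<n. \<Sum>i<m. c j i * real (Zt K T selX \<omega> k k k j i))
     + real T / real K * (\<Sum>i<m. real k * g k i (real (Zi n K T selX \<omega> i (k * d)) / (real k * real T / real K)))"

definition carry_cost :: "nat \<Rightarrow> real" where
  "carry_cost k = offobj m n c g K T (Suc k) (\<lambda>i. real (Zi n K T selX \<omega> i (k * d))) (carry_plan k)"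

lemma carry_cost_last: "carry_cost K = 0"
  by (simp add: carry_cost_def offobj_def)

lemma Vpi_eq_sum_epoch_cost: "Vpi m n c g K T selX \<omega> = (\<Sum>k=1..K. epoch_cost k)"
proof -
  have "(\<Sum>j<n. \<Sum>i<m. c j i * real (Zji K T selX \<omega> j i T))
      = (\<Sum>j<n. \<Sum>i<m. \<Sum>k=1..K. c j i * real (Zt K T selX \<omega> k k k j i))"
    by (simp add: Zji_eq_sum_epochs[of _ _ K, folded T_eq] sum_distrib_left)
  also have "\<dots> = (\<Sum>j<n. \<Sum>k=1..K. \<Sum>i<m. c j i * real (Zt K T selX \<omega> k k k j i))"
    by (intro sum.cong refl sum.swap)
  also have "\<dots> = (\<Sum>k=1..K. \<Sum>j<n. \<Sum>i<m. c j i * real (Zt K T selX \<omega> k k k j i))"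
    by (rule sum.swap)
  finally show ?thesis
    unfolding Vpi_def epoch_cost_def T_div_K by (simp add: sum.distrib sum_distrib_left)
qed

lemma Vprox_eq_epoch_cost_plus_carry_cost:
  assumes k: "1 \<le> k" "k \<le> K"
  shows "Vprox m n c g K T selX \<omega> k (\<lambda>i. real (Zi n K T selX \<omega> i ((k - 1) * d)))
           = epoch_cost k + carry_cost k"
proof -
  let ?Zt = "Zt K T selX \<omega>" and ?Zi = "Zi n K T selX \<omega>"
  have cost: "(\<Sum>j<n. \<Sum>i<m. c j i * real (?Zt k k K j i))
      = (\<Sum>j<n. \<Sum>i<m. c j i * real (?Zt k k k j i))
        + (\<Sum>j<n. \<Sum>i<m. c j i * real (\<Sum>k'=Suc k..K. carry_plan k k' j i))"
  proof -
    have "(\<Sum>j<n. \<Sum>i<m. c j i * real (?Zt k k K j i))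
        = (\<Sum>j<n. \<Sum>i<m. c j i * real (?Zt k k k j i)
                              + c j i * real (\<Sum>k'=Suc k..K. carry_plan k k' j i))"
      using k by (intro sum.cong refl) (simp add: Zt_split_carry_plan[of k K] distrib_left)
    then show ?thesis
      by (simp only: sum.distrib)
  qed
  have usage_current: "real (?Zi i ((k - 1) * d)) + real (\<Sum>j<n. ?Zt k k k j i) = real (?Zi i (k * d))" for i
    using Zi_epoch_step[OF k(1)] by simp
  have usage_later: "real (?Zi i ((k - 1) * d)) + real (\<Sum>j<n. ?Zt k k k' j i)
      = real (?Zi i (k * d)) + real (\<Sum>j<n. \<Sum>k''=Suc k..k'. carry_plan k k'' j i)"
    if "k' \<in> {Suc k..K}" "i \<in> {..<m}" for k' i
  proof -
    have "(\<Sum>j<n. ?Zt k k k' j i) = (\<Sum>j<n. ?Zt k k k j i) + (\<Sum>j<n. \<Sum>k''=Suc k..k'. carry_plan k k'' j i)"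
      using that by (simp add: Zt_split_carry_plan[of k k'] sum.distrib)
    then show ?thesis
      using usage_current[of i] by simp
  qed
  have penalty_later:
    "(\<Sum>k'=Suc k..K. \<Sum>i<m. real k' * g k' i ((real (?Zi i ((k - 1) * d)) + real (\<Sum>j<n. ?Zt k k k' j i))
                                                 / (real k' * real T / real K)))
     = (\<Sum>k'=Suc k..K. \<Sum>i<m. real k' * g k' i ((real (?Zi i (k * d))
           + real (\<Sum>j<n. \<Sum>k''=Suc k..k'. carry_plan k k'' j i)) / (real k' * real T / real K)))"
    by (intro sum.cong refl) (simp only: usage_later)
  show ?thesis
    unfolding Vprox_def epoch_cost_def carry_cost_def offobj_def cost sum.atLeast_Suc_atMost[OF k(2)]
    by (simp only: usage_current penalty_later distrib_left add_ac)
qed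

definition truncated_plan :: "nat \<Rightarrow> nat \<Rightarrow> nat \<Rightarrow> nat \<Rightarrow> nat" where
  "truncated_plan k k' j = greedy_trunc (carry_plan k k' j) (Lam T K \<omega> (Suc k) j)"

lemma truncated_plan_le: "truncated_plan k k' j i \<le> carry_plan k k' j i"
  by (simp add: truncated_plan_def greedy_trunc_le)

lemma sum_truncated_plan:
  "(\<Sum>i<m. truncated_plan k k' j i) = min (\<Sum>i<m. carry_plan k k' j i) (Lam T K \<omega> (Suc k) j)"
  unfolding truncated_plan_def by (rule sum_greedy_trunc)

lemma truncated_plan_feasible:
  assumes "1 \<le> k"
  shows "truncated_plan k \<in> offfeas m n S K (Suc k) (Lam T K \<omega> (Suc k))"
proof -
  have "Suc k \<le> k' \<and> k' \<le> K \<and> j < n \<and> i < m \<and> i \<in> S j" if "truncated_plan k k' j i \<noteq> 0" for k' j i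
  proof -
    have "carry_plan k k' j i \<noteq> 0"
      using truncated_plan_le[of k k' j i] that by linarith
    then show ?thesis
      by (rule carry_plan_support[OF assms])
  qed
  then show ?thesis
    unfolding offfeas_def by (auto simp: sum_truncated_plan)
qed

lemma truncated_plan_shortfall:
  assumes "1 \<le> k"
  shows "real (\<Sum>i<m. carry_plan k k' j i) - real (\<Sum>i<m. truncated_plan k k' j i)
           \<le> \<bar>real (Lam T K \<omega> k j) - real (Lam T K \<omega> (Suc k) j)\<bar>"
  using carry_plan_sum_resources_le[OF assms, of k' j] unfolding sum_truncated_plan
  by (cases "(\<Sum>i<m. carry_plan k k' j i) \<le> Lam T K \<omega> (Suc k) j") (simp_all add: min_def del: of_nat_sum)

lemma carry_plan_load_le:
  assumes k: "1 \<le> k" and k': "k' \<in> {Suc k..K}"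
  shows "(real (Zi n K T selX \<omega> i (k * d)) + real (\<Sum>j<n. \<Sum>k''=Suc k..k'. carry_plan k k'' j i))
           / (real k' * real T / real K) \<le> 1"
proof -
  have "Zi n K T selX \<omega> i (k * d) \<le> k * d"
    using k' T_eq by (intro Zi_le) simp
  moreover have "(\<Sum>j<n. \<Sum>k''=Suc k..k'. carry_plan k k'' j i) \<le> (k' - k) * d"
  proof -
    have "(\<Sum>j<n. \<Sum>k''=Suc k..k'. carry_plan k k'' j i) = (\<Sum>k''=Suc k..k'. \<Sum>j<n. carry_plan k k'' j i)"
      by (rule sum.swap)
    also have "\<dots> \<le> (\<Sum>k''=Suc k..k'. d)"
      by (intro sum_mono carry_plan_sum_types_le[OF k])
    finally show ?thesis by simp
  qed
  moreover have "k * d \<le> k' * d"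
    using k' by simp
  ultimately have "real (Zi n K T selX \<omega> i (k * d)) + real (\<Sum>j<n. \<Sum>k''=Suc k..k'. carry_plan k k'' j i)
      \<le> real (k' * d)"
    unfolding of_nat_add[symmetric] of_nat_le_iff diff_mult_distrib by linarith
  then show ?thesis
    using k' d_pos real_T_div_K by (simp add: times_divide_eq_right[symmetric])
qed

lemma Voff_Suc_le_carry_cost:
  assumes k: "1 \<le> k" "Suc k \<le> K"
    and lip: "\<forall>k'\<in>{1..K}. \<forall>i<m. L-lipschitz_on {0..1} (g k' i)"
  shows "Voff m n c S g K T \<omega> (Suc k) (\<lambda>i. real (Zi n K T selX \<omega> i (k * d)))
     \<le> carry_cost k + ((\<Sum>j<n. \<Sum>i<m. \<bar>c j i\<bar>) * real K + \<bar>L\<bar> * real K * real K)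
                       * (\<Sum>j<n. \<bar>real (Lam T K \<omega> k j) - real (Lam T K \<omega> (Suc k) j)\<bar>)"
proof -
  have "Voff m n c S g K T \<omega> (Suc k) (\<lambda>i. real (Zi n K T selX \<omega> i (k * d)))
      \<le> offobj m n c g K T (Suc k) (\<lambda>i. real (Zi n K T selX \<omega> i (k * d))) (truncated_plan k)"
    by (rule Voff_le_offobj[OF truncated_plan_feasible[OF k(1)]])
  also have "\<dots> \<le> carry_cost k + ((\<Sum>j<n. \<Sum>i<m. \<bar>c j i\<bar>) * real K + \<bar>L\<bar> * real K * real K)
                       * (\<Sum>j<n. \<bar>real (Lam T K \<omega> k j) - real (Lam T K \<omega> (Suc k) j)\<bar>)"
    unfolding carry_cost_def
  proof (rule offobj_le_of_shortfall)
    show "\<forall>k'\<in>{Suc k..K}. \<forall>i<m. L-lipschitz_on {0..1} (g k' i)"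
      using lip by auto
    show "0 < real T / real K"
      using d_pos real_T_div_K by simp
  qed (use k truncated_plan_le truncated_plan_shortfall carry_plan_load_le in auto)
  finally show ?thesis .
qed

lemma Vpi_le_Voff_plus_sum_Regt:
  assumes lip: "\<forall>k'\<in>{1..K}. \<forall>i<m. L-lipschitz_on {0..1} (g k' i)"
  shows "Vpi m n c g K T selX \<omega> \<le> Voff m n c S g K T \<omega> 1 (\<lambda>_. 0) + (\<Sum>k=1..K. Regt m n c S g K T selX \<omega> k)
     + ((\<Sum>j<n. \<Sum>i<m. \<bar>c j i\<bar>) * real K + \<bar>L\<bar> * real K * real K)
       * (\<Sum>k\<in>{1..<K}. \<Sum>j<n. \<bar>real (Lam T K \<omega> k j) - real (Lam T K \<omega> (Suc k) j)\<bar>)"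
proof -
  define Lip where "Lip = (\<Sum>j<n. \<Sum>i<m. \<bar>c j i\<bar>) * real K + \<bar>L\<bar> * real K * real K"
  define \<delta> where "\<delta> k = (\<Sum>j<n. \<bar>real (Lam T K \<omega> k j) - real (Lam T K \<omega> (Suc k) j)\<bar>)" for k
  define VO where "VO k = Voff m n c S g K T \<omega> k (\<lambda>i. real (Zi n K T selX \<omega> i ((k - 1) * d)))" for k
  have sum_Regt: "(\<Sum>k=1..K. Regt m n c S g K T selX \<omega> k)
      = Vpi m n c g K T selX \<omega> + (\<Sum>k=1..K. carry_cost k) - (\<Sum>k=1..K. VO k)"
  proof -
    have "Regt m n c S g K T selX \<omega> k = epoch_cost k + carry_cost k - VO k" if "k \<in> {1..K}" for k
      using that Vprox_eq_epoch_cost_plus_carry_cost[of k] unfolding Regt_def Let_def T_div_K VO_def by simp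
    then show ?thesis
      by (simp add: Vpi_eq_sum_epoch_cost sum.distrib sum_subtractf)
  qed
  have VO_first: "VO 1 = Voff m n c S g K T \<omega> 1 (\<lambda>_. 0)"
    by (simp add: VO_def Zi_def Zji_def)
  have VO_shift: "(\<Sum>k=1..K. VO k) = VO 1 + (\<Sum>k\<in>{1..<K}. VO (Suc k))"
    using K_pos by (rule sum_atLeast1_atMost_shift)
  have "(\<Sum>k\<in>{1..<K}. VO (Suc k)) \<le> (\<Sum>k\<in>{1..<K}. carry_cost k + Lip * \<delta> k)"
    using Voff_Suc_le_carry_cost[OF _ _ lip] unfolding VO_def Lip_def \<delta>_def by (intro sum_mono) auto
  also have "\<dots> = (\<Sum>k=1..K. carry_cost k) + Lip * (\<Sum>k\<in>{1..<K}. \<delta> k)"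
    using K_pos by (simp add: sum.distrib sum_distrib_left sum.last_plus carry_cost_last)
  finally show ?thesis
    using sum_Regt VO_first VO_shift unfolding Lip_def \<delta>_def by simp
qed

end

section \<open>Expected cost\<close>

lemma powr_five_halves_mult_sqrt:
  fixes x y :: real
  assumes "0 \<le> x" "0 \<le> y"
  shows "x powr (5/2) * sqrt (x * y) = x ^ 3 * sqrt y"
proof (cases "x = 0")
  case False
  then have "x powr (5/2) = x\<^sup>2 * sqrt x"
    using assms(1) by (simp add: powr_add[of x 2 "1/2", simplified] powr_half_sqrt)
  then show ?thesis
    using assms by (simp add: real_sqrt_mult power2_eq_square power3_eq_cube)
qed simp

context epochs
begin

lemma truncation_error_le:
  fixes a b :: real
  assumes "0 \<le> a" "0 \<le> b"
  shows "(a * real K + b * real K * real K) * (real (K - 1) * (real n * sqrt (2 * real d)))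
           \<le> 2 * real n * (a + b) * real K powr (5/2) * sqrt (real T)"
proof -
  have "a * real K + b * real K * real K \<le> (a + b) * real K * real K"
    using assms K_pos by (simp add: algebra_simps mult_left_mono)
  moreover have "real (K - 1) * (real n * sqrt (2 * real d)) \<le> real K * (real n * (2 * sqrt (real d)))"
  proof (intro mult_mono mult_left_mono)
    have "sqrt 2 \<le> sqrt ((2::real)\<^sup>2)"
      by (rule real_sqrt_le_mono) simp
    then have "sqrt 2 \<le> (2::real)"
      by simp
    then show "sqrt (2 * real d) \<le> 2 * sqrt (real d)"
      by (simp add: real_sqrt_mult mult_right_mono)
  qed auto
  ultimately have "(a * real K + b * real K * real K) * (real (K - 1) * (real n * sqrt (2 * real d)))
      \<le> ((a + b) * real K * real K) * (real K * (real n * (2 * sqrt (real d))))"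
    using assms by (intro mult_mono[of _ "(a + b) * real K * real K"]) auto
  also have "\<dots> = 2 * real n * (a + b) * real K powr (5/2) * sqrt (real T)"
    by (simp add: T_eq powr_five_halves_mult_sqrt mult.assoc power3_eq_cube)
  finally show ?thesis .
qed

lemma Ex_Vpi_le:
  assumes p_nonneg: "\<forall>j<n. 0 \<le> p j" and p_sum: "(\<Sum>j<n. p j) = 1"
    and lip: "\<forall>k\<in>{1..K}. \<forall>i<m. L-lipschitz_on {0..1} (g k i)"
    and valid: "\<forall>\<omega>\<in>PiE {1..T} (\<lambda>_. {..<n}). dgd_valid m c S g K T \<eta> \<mu>1 selX selA \<omega>"
  shows "Ex n T p (Vpi m n c g K T selX)
           \<le> Ex n T p (\<lambda>\<omega>. Voff m n c S g K T \<omega> 1 (\<lambda>_. 0))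
             + (\<Sum>k=1..K. Ex n T p (\<lambda>\<omega>. Regt m n c S g K T selX \<omega> k))
             + 2 * real n * ((\<Sum>j<n. \<Sum>i<m. \<bar>c j i\<bar>) + \<bar>L\<bar>) * real K powr (5/2) * sqrt (real T)"
proof -
  define cS where "cS = (\<Sum>j<n. \<Sum>i<m. \<bar>c j i\<bar>)"
  define Lip where "Lip = cS * real K + \<bar>L\<bar> * real K * real K"
  define \<delta> where "\<delta> k j \<omega> = \<bar>real (Lam T K \<omega> k j) - real (Lam T K \<omega> (Suc k) j)\<bar>" for k j \<omega>
  have cS_nonneg: "0 \<le> cS"
    by (simp add: cS_def sum_nonneg)
  have "Ex n T p (Vpi m n c g K T selX)
      \<le> Ex n T p (\<lambda>\<omega>. Voff m n c S g K T \<omega> 1 (\<lambda>_. 0) + (\<Sum>k=1..K. Regt m n c S g K T selX \<omega> k)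
                        + Lip * (\<Sum>k\<in>{1..<K}. \<Sum>j<n. \<delta> k j \<omega>))"
  proof (rule Ex_mono[OF p_nonneg])
    fix \<omega> assume "\<omega> \<in> PiE {1..T} (\<lambda>_. {..<n})"
    then interpret dgd_run K T d m n c S g \<eta> \<mu>1 selX selA \<omega>
      using valid by unfold_locales auto
    show "Vpi m n c g K T selX \<omega> \<le> Voff m n c S g K T \<omega> 1 (\<lambda>_. 0) + (\<Sum>k=1..K. Regt m n c S g K T selX \<omega> k)
                        + Lip * (\<Sum>k\<in>{1..<K}. \<Sum>j<n. \<delta> k j \<omega>)"
      using Vpi_le_Voff_plus_sum_Regt[OF lip] unfolding Lip_def cS_def \<delta>_def .
  qed
  also have "\<dots> = Ex n T p (\<lambda>\<omega>. Voff m n c S g K T \<omega> 1 (\<lambda>_. 0))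
      + (\<Sum>k=1..K. Ex n T p (\<lambda>\<omega>. Regt m n c S g K T selX \<omega> k))
      + Lip * (\<Sum>k\<in>{1..<K}. \<Sum>j<n. Ex n T p (\<delta> k j))"
    by (simp only: Ex_add Ex_cmult Ex_sum finite_atLeastAtMost finite_atLeastLessThan finite_lessThan)
  also have "\<dots> \<le> Ex n T p (\<lambda>\<omega>. Voff m n c S g K T \<omega> 1 (\<lambda>_. 0))
      + (\<Sum>k=1..K. Ex n T p (\<lambda>\<omega>. Regt m n c S g K T selX \<omega> k))
      + Lip * (\<Sum>k\<in>{1..<K}. \<Sum>j<n. sqrt (2 * real d))"
    unfolding \<delta>_def using Ex_abs_Lam_diff_le[OF p_nonneg p_sum] cS_nonneg
    by (intro add_left_mono mult_left_mono sum_mono) (auto simp: Lip_def)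
  also have "\<dots> \<le> Ex n T p (\<lambda>\<omega>. Voff m n c S g K T \<omega> 1 (\<lambda>_. 0))
      + (\<Sum>k=1..K. Ex n T p (\<lambda>\<omega>. Regt m n c S g K T selX \<omega> k))
      + 2 * real n * (cS + \<bar>L\<bar>) * real K powr (5/2) * sqrt (real T)"
    using truncation_error_le[OF cS_nonneg abs_ge_zero] by (simp add: Lip_def)
  finally show ?thesis
    unfolding cS_def .
qed

end

theorem lemma2:
  fixes m n :: nat and c :: "nat \<Rightarrow> nat \<Rightarrow> real" and S :: "nat \<Rightarrow> nat set"
    and L :: real and p :: "nat \<Rightarrow> real"
  assumes p_nonneg: "\<forall>j<n. 0 \<le> p j" and p_sum: "(\<Sum>j<n. p j) = 1"
  shows "\<exists>C::real. \<forall>K::nat. K \<ge> 1 \<longrightarrow> (\<exists>T0::nat. \<forall>T::nat. T \<ge> T0 \<longrightarrow> K dvd T \<longrightarrow>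
    (\<forall>(g :: nat \<Rightarrow> nat \<Rightarrow> real \<Rightarrow> real) (\<rho> :: nat \<Rightarrow> nat \<Rightarrow> real) (\<eta>::real)
       (\<mu>1 :: nat \<Rightarrow> nat \<Rightarrow> real) (selX :: xsel) (selA :: asel).
      (\<forall>k\<in>{1..K}. \<forall>i<m. \<rho> k i \<in> {0..1} \<and> convex_on {0..1} (g k i)
          \<and> L-lipschitz_on {0..1} (g k i) \<and> (\<forall>x\<in>{0..1}. 0 \<le> g k i x) \<and> g k i (\<rho> k i) = 0)
      \<longrightarrow> \<eta> > 0
      \<longrightarrow> (\<forall>\<omega>\<in>PiE {1..T} (\<lambda>_. {..<n}). dgd_valid m c S g K T \<eta> \<mu>1 selX selA \<omega>)
      \<longrightarrow> Ex n T p (Vpi m n c g K T selX)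
          \<le> Ex n T p (\<lambda>\<omega>. Voff m n c S g K T \<omega> 1 (\<lambda>_. 0))
            + (\<Sum>k=1..K. Ex n T p (\<lambda>\<omega>. Regt m n c S g K T selX \<omega> k))
            + C * real K powr (5/2) * sqrt (real T)))"
proof (intro exI[of _ "2 * real n * ((\<Sum>j<n. \<Sum>i<m. \<bar>c j i\<bar>) + \<bar>L\<bar>)"] exI[of _ "1::nat"] allI impI)
  fix K T :: nat and g :: "nat \<Rightarrow> nat \<Rightarrow> real \<Rightarrow> real" and \<rho> :: "nat \<Rightarrow> nat \<Rightarrow> real" and \<eta> :: real
    and \<mu>1 :: "nat \<Rightarrow> nat \<Rightarrow> real" and selX :: xsel and selA :: asel
  assume K: "K \<ge> 1" and T: "T \<ge> 1" "K dvd T"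
    and hyp: "\<forall>k\<in>{1..K}. \<forall>i<m. \<rho> k i \<in> {0..1} \<and> convex_on {0..1} (g k i)
          \<and> L-lipschitz_on {0..1} (g k i) \<and> (\<forall>x\<in>{0..1}. 0 \<le> g k i x) \<and> g k i (\<rho> k i) = 0"
    and valid: "\<forall>\<omega>\<in>PiE {1..T} (\<lambda>_. {..<n}). dgd_valid m c S g K T \<eta> \<mu>1 selX selA \<omega>"
  obtain d where "T = K * d"
    using T(2) by (auto elim: dvdE)
  moreover have "d \<ge> 1"
    using T(1) \<open>T = K * d\<close> by (cases d) auto
  ultimately interpret epochs K T d
    using K by unfold_locales
  show "Ex n T p (Vpi m n c g K T selX)
          \<le> Ex n T p (\<lambda>\<omega>. Voff m n c S g K T \<omega> 1 (\<lambda>_. 0))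
            + (\<Sum>k=1..K. Ex n T p (\<lambda>\<omega>. Regt m n c S g K T selX \<omega> k))
            + 2 * real n * ((\<Sum>j<n. \<Sum>i<m. \<bar>c j i\<bar>) + \<bar>L\<bar>) * real K powr (5/2) * sqrt (real T)"
    using hyp by (intro Ex_Vpi_le[OF p_nonneg p_sum _ valid]) blast
qed

end
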